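(* Fix $\sigma\in(0,\tfrac12)$. The following assertions hold for problem $(P_{\lambda,\mu})$ described in the context: (i) for every $\lambda>0$ there exists $\mu_0^{*}(\lambda)>0$ such that $(P_{\lambda,\mu})$ has no solution for every $\mu\in(0,\mu_0^{*}(\lambda))$; (ii) there exists $\lambda^{*}>0$ such that for every $\lambda\in(0,\lambda^{*})$ there exists $\mu_0^{**}(\lambda)>\mu_0^{*}(\lambda)$ such that $(P_{\lambda,\mu})$ has no solution for every $\mu>\mu_0^{**}(\lambda)$.
   Context: Let $\sigma\in(0,\tfrac12)$ be fixed and let $g(s)=s^2(1-s)$ for $s\in[0,1]$. For $\lambda>0$, $\mu>0$ define the step function $a_{\lambda,\mu}:[0,1]\to\mathbb{R}$ by $a_{\lambda,\mu}(t)=\lambda$ if $t\in[0,\sigma]\cup[1-\sigma,1]$ and $a_{\lambda,\mu}(t)=-\mu$ if $t\in(\sigma,1-\sigma)$. Problem $(P_{\lambda,\mu})$ is: $-u''(t)=a_{\lambda,\mu}(t)\,g(u(t))$ for $t\in(0,1)$, $0\le u(t)\le 1$ on $[0,1]$, $u'(0)=u'(1)=0$. A solution of $(P_{\lambda,\mu})$ is a function $u\in\mathcal{C}^1([0,1])$ with $u'$ absolutely continuous, $0<u(t)<1$ for all $t\in[0,1]$, which satisfies the differential equation for a.e. $t\in(0,1)$ and the Neumann conditions $u'(0)=u'(1)=0$. *)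

theory Defs
  imports "HOL-Analysis.Analysis"
begin

definition gnl :: "real \<Rightarrow> real" where
  "gnl s = s^2 * (1 - s)"

definition aw :: "real \<Rightarrow> real \<Rightarrow> real \<Rightarrow> real \<Rightarrow> real" where
  "aw \<sigma> lam mu t =
     (if t \<in> {0..\<sigma>} \<union> {1-\<sigma>..1} then lam else - mu)"

definition abs_cont_on :: "real \<Rightarrow> real \<Rightarrow> (real \<Rightarrow> real) \<Rightarrow> bool" where
  "abs_cont_on a b f \<longleftrightarrow>
     (\<forall>\<epsilon>>0. \<exists>\<delta>>0. \<forall>(n::nat) (l::nat \<Rightarrow> real) (r::nat \<Rightarrow> real).
        (\<forall>k<n. a \<le> l k \<and> l k \<le> r k \<and> r k \<le> b) \<and>
        (\<forall>k. Suc k < n \<longrightarrow> r k \<le> l (Suc k)) \<and>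
        (\<Sum>k<n. r k - l k) < \<delta>
        \<longrightarrow> (\<Sum>k<n. \<bar>f (r k) - f (l k)\<bar>) < \<epsilon>)"

definition is_solution :: "real \<Rightarrow> real \<Rightarrow> real \<Rightarrow> (real \<Rightarrow> real) \<Rightarrow> bool" where
  "is_solution \<sigma> lam mu u \<longleftrightarrow>
     (\<exists>u'. (\<forall>t\<in>{0..1}. (u has_real_derivative u' t) (at t within {0..1})) \<and>
           continuous_on {0..1} u' \<and>
           abs_cont_on 0 1 u' \<and>
           (\<forall>t\<in>{0..1}. 0 < u t \<and> u t < 1) \<and>
           (AE t in lborel. t \<in> {0<..<1} \<longrightarrow>
              (u' has_real_derivative - (aw \<sigma> lam mu t * gnl (u t))) (at t)) \<and>
           u' 0 = 0 \<and> u' 1 = 0)"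

end

theory Submission
  imports Defs
begin

text \<open>Off the jump points \<sigma> and 1 - \<sigma> of the weight a, a solution is classical: u' is absolutely
  continuous and its a.e. derivative -a g(u) is continuous on each piece, so (by Cousin's lemma) it is
  a true derivative there. The quotient z = -u'/g(u) vanishes at 0 and 1 and satisfies the Riccati
  equation z' = a + g'(u) z^2 with -1 \<le> g'(u) \<le> 1/3. Comparison with linear barriers gives the
  two assertions. For small mu, z climbs to a positive level on [0, \<sigma>] and stays positive across
  the middle piece, while the same argument run backwards from t = 1 makes z(1 - \<sigma>) negative.
  For lam < 2/3 and large mu, z(\<sigma>) \<le> 1/2, the middle piece drives z below -3/2, while the
  backward argument from t = 1 keeps z(1 - \<sigma>) \<ge> -1/2.\<close>

definition abs_cont_delta :: "real \<Rightarrow> real \<Rightarrow> (real \<Rightarrow> real) \<Rightarrow> real \<Rightarrow> real \<Rightarrow> bool" where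
  "abs_cont_delta a b f \<epsilon> \<delta> \<longleftrightarrow>
     (\<forall>n l r. (\<forall>k<n. a \<le> l k \<and> l k \<le> r k \<and> r k \<le> b) \<and>
        (\<forall>k. Suc k < n \<longrightarrow> r k \<le> l (Suc k)) \<and> (\<Sum>k<n. r k - l k) < \<delta>
        \<longrightarrow> (\<Sum>k<n. \<bar>f (r k) - f (l k)\<bar>) < \<epsilon>)"

lemma abs_cont_on_iff_delta: "abs_cont_on a b f \<longleftrightarrow> (\<forall>\<epsilon>>0. \<exists>\<delta>>0. abs_cont_delta a b f \<epsilon> \<delta>)"
  unfolding abs_cont_on_def abs_cont_delta_def by (rule refl)

lemma abs_cont_deltaD:
  assumes "abs_cont_delta a b f \<epsilon> \<delta>" "\<forall>k<n. a \<le> l k \<and> l k \<le> r k \<and> r k \<le> b"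
    "\<forall>k. Suc k < n \<longrightarrow> r k \<le> l (Suc k)" "(\<Sum>k<n. r k - l k) < \<delta>"
  shows "(\<Sum>k<n. \<bar>f (r k) - f (l k)\<bar>) < \<epsilon>"
  using assms unfolding abs_cont_delta_def by blast

lemma abs_cont_on_subinterval:
  assumes f: "abs_cont_on a b f" and "a \<le> c" "d \<le> b"
  shows "abs_cont_on c d f"
proof -
  have "abs_cont_delta c d f \<epsilon> \<delta>" if "abs_cont_delta a b f \<epsilon> \<delta>" for \<epsilon> \<delta>
    unfolding abs_cont_delta_def
  proof (intro allI impI, elim conjE)
    fix n l r assume lr: "\<forall>k<n. c \<le> l k \<and> l k \<le> r k \<and> r k \<le> d"
      and "\<forall>k. Suc k < n \<longrightarrow> r k \<le> l (Suc k)" "(\<Sum>k<n. r k - l k) < \<delta>"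
    moreover have "\<forall>k<n. a \<le> l k \<and> l k \<le> r k \<and> r k \<le> b" using lr \<open>a \<le> c\<close> \<open>d \<le> b\<close> by force
    ultimately show "(\<Sum>k<n. \<bar>f (r k) - f (l k)\<bar>) < \<epsilon>" using abs_cont_deltaD[OF that] by blast
  qed
  thus ?thesis using f unfolding abs_cont_on_iff_delta by blast
qed

lemma sum_abs_increments_diff_lipschitz_le:
  fixes f g :: "real \<Rightarrow> real"
  assumes g: "M-lipschitz_on {a..b} g" and lr: "\<forall>k<n. a \<le> l k \<and> l k \<le> r k \<and> r k \<le> b"
  shows "(\<Sum>k<n. \<bar>(f (r k) - g (r k)) - (f (l k) - g (l k))\<bar>)
           \<le> (\<Sum>k<n. \<bar>f (r k) - f (l k)\<bar>) + M * (\<Sum>k<n. r k - l k)"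
proof -
  have "(\<Sum>k<n. \<bar>(f (r k) - g (r k)) - (f (l k) - g (l k))\<bar>)
      \<le> (\<Sum>k<n. \<bar>f (r k) - f (l k)\<bar> + M * (r k - l k))"
  proof (rule sum_mono)
    fix k assume "k \<in> {..<n}"
    hence "l k \<in> {a..b}" "r k \<in> {a..b}" "l k \<le> r k" using lr by auto
    hence "\<bar>g (r k) - g (l k)\<bar> \<le> M * (r k - l k)"
      using lipschitz_onD[OF g, of "r k" "l k"] by (simp add: dist_real_def)
    thus "\<bar>(f (r k) - g (r k)) - (f (l k) - g (l k))\<bar> \<le> \<bar>f (r k) - f (l k)\<bar> + M * (r k - l k)"
      by linarith
  qed
  thus ?thesis by (simp add: sum.distrib sum_distrib_left)
qed

lemma abs_cont_on_diff_lipschitz: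
  assumes f: "abs_cont_on a b f" and g: "M-lipschitz_on {a..b} g"
  shows "abs_cont_on a b (\<lambda>t. f t - g t)"
  unfolding abs_cont_on_iff_delta
proof (intro allI impI)
  fix \<epsilon> :: real assume "\<epsilon> > 0"
  then obtain \<delta> where "\<delta> > 0" and \<delta>: "abs_cont_delta a b f (\<epsilon> / 2) \<delta>"
    using f unfolding abs_cont_on_iff_delta by (meson half_gt_zero)
  have "M \<ge> 0" using g by (rule lipschitz_on_nonneg)
  define \<delta>' where "\<delta>' = min \<delta> (\<epsilon> / (2 * (M + 1)))"
  have "\<delta>' > 0" using \<open>\<delta> > 0\<close> \<open>\<epsilon> > 0\<close> \<open>M \<ge> 0\<close> by (simp add: \<delta>'_def)
  have "M * \<delta>' \<le> M * (\<epsilon> / (2 * (M + 1)))" using \<open>M \<ge> 0\<close> by (intro mult_left_mono) (auto simp: \<delta>'_def)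
  also have "\<dots> \<le> \<epsilon> / 2" using \<open>M \<ge> 0\<close> \<open>\<epsilon> > 0\<close> by (simp add: field_simps)
  finally have M\<delta>': "M * \<delta>' \<le> \<epsilon> / 2" .
  have "abs_cont_delta a b (\<lambda>t. f t - g t) \<epsilon> \<delta>'"
    unfolding abs_cont_delta_def
  proof (intro allI impI, elim conjE)
    fix n l r assume lr: "\<forall>k<n. a \<le> l k \<and> l k \<le> r k \<and> r k \<le> b"
      and sep: "\<forall>k. Suc k < n \<longrightarrow> r k \<le> l (Suc k)" and small: "(\<Sum>k<n. r k - l k) < \<delta>'"
    have "(\<Sum>k<n. \<bar>f (r k) - f (l k)\<bar>) < \<epsilon> / 2"
      using abs_cont_deltaD[OF \<delta> lr sep] small by (simp add: \<delta>'_def)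
    moreover have "M * (\<Sum>k<n. r k - l k) \<le> M * \<delta>'" using small \<open>M \<ge> 0\<close> by (simp add: mult_left_mono)
    ultimately show "(\<Sum>k<n. \<bar>(f (r k) - g (r k)) - (f (l k) - g (l k))\<bar>) < \<epsilon>"
      using sum_abs_increments_diff_lipschitz_le[OF g lr, of f] M\<delta>' by linarith
  qed
  thus "\<exists>\<delta>>0. abs_cont_delta a b (\<lambda>t. f t - g t) \<epsilon> \<delta>" using \<open>\<delta>' > 0\<close> by blast
qed

lemma division_of_real_interval:
  fixes \<D> :: "real set set"
  assumes "\<D> division_of S" "K \<in> \<D>"
  shows "K = {Inf K..Sup K}" "Inf K \<le> Sup K"
proof -
  obtain c d where "K = cbox c d" "K \<noteq> {}" using division_ofD(3,4)[OF assms] by metis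
  thus "K = {Inf K..Sup K}" "Inf K \<le> Sup K" by auto
qed

lemma division_of_real_degenerate:
  fixes \<D> :: "real set set"
  assumes "\<D> division_of S" "K \<in> \<D>" "interior K = {}"
  shows "Sup K = Inf K"
proof -
  have "{Inf K<..<Sup K} = {}"
    using assms(3) division_of_real_interval(1)[OF assms(1,2)] by (metis interior_atLeastAtMost_real)
  thus ?thesis using division_of_real_interval(2)[OF assms(1,2)] by simp
qed

lemma disjoint_open_intervals_separated:
  fixes l r l' r' :: real
  assumes "l < r" "l' < r'" "{l<..<r} \<inter> {l'<..<r'} = {}"
  shows "r \<le> l' \<or> r' \<le> l"
proof (rule ccontr)
  assume "\<not> ?thesis"
  hence "max l l' < min r r'" using assms(1,2) by auto
  hence "(max l l' + min r r') / 2 \<in> {l<..<r} \<inter> {l'<..<r'}" by auto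
  thus False using assms(3) by blast
qed

lemma division_of_real_separated:
  fixes \<D> :: "real set set"
  assumes div: "\<D> division_of S" and "K \<in> \<D>" "L \<in> \<D>" "K \<noteq> L" "interior K \<noteq> {}" "interior L \<noteq> {}"
  shows "Sup K \<le> Inf L \<or> Sup L \<le> Inf K"
proof (rule disjoint_open_intervals_separated)
  have K: "K = {Inf K..Sup K}" and L: "L = {Inf L..Sup L}"
    using division_of_real_interval(1)[OF div] assms(2,3) by blast+
  thus "Inf K < Sup K" "Inf L < Sup L" using assms(5,6) by (metis interior_atLeastAtMost_real
      greaterThanLessThan_empty_iff not_less)+
  have "interior K \<inter> interior L = {}" using division_ofD(5)[OF div assms(2-4)] .
  thus "{Inf K<..<Sup K} \<inter> {Inf L<..<Sup L} = {}" using K L by (metis interior_atLeastAtMost_real)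
qed

lemma finite_enumerate_by_key:
  fixes key :: "'a \<Rightarrow> 'b::linorder"
  assumes "finite A" "inj_on key A"
  obtains e n where "bij_betw e {..<n} A" "\<And>k. Suc k < n \<Longrightarrow> key (e k) < key (e (Suc k))"
proof -
  define xs where "xs = sorted_list_of_set (key ` A)"
  have xs: "set xs = key ` A" "distinct xs" "sorted_wrt (<) xs" using assms(1) by (auto simp: xs_def)
  define e where "e = the_inv_into A key \<circ> (!) xs"
  have key_e: "key (e k) = xs ! k" if "k < length xs" for k
    using that xs(1) assms(2) nth_mem by (fastforce simp: e_def intro: f_the_inv_into_f)
  show thesis
  proof (rule that[of e "length xs"])
    show "bij_betw e {..<length xs} A"
      unfolding e_def using xs assms(2)
      by (intro bij_betw_trans bij_betw_nth bij_betw_the_inv_into) (auto simp: bij_betw_def)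
    show "key (e k) < key (e (Suc k))" if "Suc k < length xs" for k
      using key_e[of k] key_e[OF that] sorted_wrt_nth_less[OF xs(3), of k "Suc k"] that by simp
  qed
qed

lemma division_of_real_enumerate:
  fixes \<D> :: "real set set"
  assumes div: "\<D> division_of S"
  obtains l r n where "bij_betw (\<lambda>k. {l k..r k}) {..<n} {K \<in> \<D>. interior K \<noteq> {}}"
    "\<And>k. k < n \<Longrightarrow> l k < r k" "\<And>k. Suc k < n \<Longrightarrow> r k \<le> l (Suc k)"
proof -
  define \<D>' where "\<D>' = {K \<in> \<D>. interior K \<noteq> {}}"
  have K: "{Inf K..Sup K} = K" "Inf K < Sup K" if "K \<in> \<D>'" for K
    using division_of_real_interval[OF div, of K] that unfolding \<D>'_def
    by (metis (mono_tags) interior_atLeastAtMost_real greaterThanLessThan_empty_iff not_less mem_Collect_eq)+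
  have sep: "Sup K \<le> Inf L \<or> Sup L \<le> Inf K" if "K \<in> \<D>'" "L \<in> \<D>'" "K \<noteq> L" for K L
    using division_of_real_separated[OF div] that by (auto simp: \<D>'_def)
  have "inj_on Inf \<D>'"
  proof (rule inj_onI, rule ccontr)
    fix K L assume "K \<in> \<D>'" "L \<in> \<D>'" "Inf K = Inf L" "K \<noteq> L"
    thus False using sep[of K L] K(2)[of K] K(2)[of L] by linarith
  qed
  moreover have "finite \<D>'" using division_ofD(1)[OF div] by (simp add: \<D>'_def)
  ultimately obtain e n where e: "bij_betw e {..<n} \<D>'"
    and mono: "\<And>k. Suc k < n \<Longrightarrow> Inf (e k) < Inf (e (Suc k))"
    using finite_enumerate_by_key by blast
  have e_mem: "e k \<in> \<D>'" if "k < n" for k using e that by (auto simp: bij_betw_def)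
  show thesis
  proof (rule that[of "\<lambda>k. Inf (e k)" "\<lambda>k. Sup (e k)" n, folded \<D>'_def])
    show "bij_betw (\<lambda>k. {Inf (e k)..Sup (e k)}) {..<n} \<D>'"
      using e by (rule bij_betw_cong[THEN iffD2, rotated]) (simp add: K(1) e_mem)
    show "Inf (e k) < Sup (e k)" if "k < n" for k using K(2)[OF e_mem[OF that]] .
    show "Sup (e k) \<le> Inf (e (Suc k))" if "Suc k < n" for k
    proof -
      have "e k \<in> \<D>'" "e (Suc k) \<in> \<D>'" "e k \<noteq> e (Suc k)" using e_mem mono[OF that] that by auto
      thus ?thesis using sep K(2) mono[OF that] by fastforce
    qed
  qed
qed

lemma abs_cont_on_division:
  assumes f: "abs_cont_on a b f" and "\<epsilon> > 0"
  shows "\<exists>\<delta>>0. \<forall>\<D> S. \<D> division_of S \<longrightarrow> S \<subseteq> {a..b} \<longrightarrow> measure lebesgue S < \<delta> \<longrightarrow>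
           (\<Sum>K\<in>\<D>. \<bar>f (Sup K) - f (Inf K)\<bar>) < \<epsilon>"
proof -
  obtain \<delta> where "\<delta> > 0" and \<delta>: "abs_cont_delta a b f \<epsilon> \<delta>"
    using f \<open>\<epsilon> > 0\<close> unfolding abs_cont_on_iff_delta by blast
  have "(\<Sum>K\<in>\<D>. \<bar>f (Sup K) - f (Inf K)\<bar>) < \<epsilon>"
    if div: "\<D> division_of S" and "S \<subseteq> {a..b}" and small: "measure lebesgue S < \<delta>" for \<D> S
  proof -
    define \<D>' where "\<D>' = {K \<in> \<D>. interior K \<noteq> {}}"
    have "finite \<D>" and "\<D>' \<subseteq> \<D>" using division_ofD(1)[OF div] by (auto simp: \<D>'_def)
    obtain l r n where bij: "bij_betw (\<lambda>k. {l k..r k}) {..<n} \<D>'"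
      and lr: "\<And>k. k < n \<Longrightarrow> l k < r k" and sep: "\<And>k. Suc k < n \<Longrightarrow> r k \<le> l (Suc k)"
      using division_of_real_enumerate[OF div] unfolding \<D>'_def by blast
    have reindex: "(\<Sum>K\<in>\<D>'. h K) = (\<Sum>k<n. h {l k..r k})" for h :: "real set \<Rightarrow> real"
      using sum.reindex_bij_betw[OF bij, of h] by simp
    have bounds: "\<forall>k<n. a \<le> l k \<and> l k \<le> r k \<and> r k \<le> b"
    proof (intro allI impI)
      fix k assume "k < n"
      hence "{l k..r k} \<in> \<D>" using bij \<open>\<D>' \<subseteq> \<D>\<close> by (auto simp: bij_betw_def)
      hence "{l k..r k} \<subseteq> {a..b}" using division_ofD(2)[OF div] \<open>S \<subseteq> {a..b}\<close> by blast
      thus "a \<le> l k \<and> l k \<le> r k \<and> r k \<le> b" using lr[OF \<open>k < n\<close>] by auto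
    qed
    have "(\<Sum>k<n. r k - l k) = (\<Sum>K\<in>\<D>'. measure lebesgue K)"
      using reindex[of "measure lebesgue"] lr by (simp add: less_imp_le)
    also have "\<dots> \<le> (\<Sum>K\<in>\<D>. measure lebesgue K)"
      using \<open>finite \<D>\<close> \<open>\<D>' \<subseteq> \<D>\<close> by (intro sum_mono2) auto
    also have "\<dots> < \<delta>" using content_division[OF div] small by simp
    finally have "(\<Sum>k<n. \<bar>f (r k) - f (l k)\<bar>) < \<epsilon>" using abs_cont_deltaD[OF \<delta> bounds] sep by blast
    moreover have "(\<Sum>K\<in>\<D>. \<bar>f (Sup K) - f (Inf K)\<bar>) = (\<Sum>K\<in>\<D>'. \<bar>f (Sup K) - f (Inf K)\<bar>)"
      using \<open>finite \<D>\<close> \<open>\<D>' \<subseteq> \<D>\<close> division_of_real_degenerate[OF div]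
      by (intro sum.mono_neutral_right) (auto simp: \<D>'_def)
    moreover have "\<dots> = (\<Sum>k<n. \<bar>f (r k) - f (l k)\<bar>)"
      using reindex lr by (simp add: less_imp_le)
    ultimately show ?thesis by simp
  qed
  thus ?thesis using \<open>\<delta> > 0\<close> by blast
qed

lemma sum_tagged_partial_division_real:
  fixes d :: "real set \<Rightarrow> real"
  assumes p: "p tagged_partial_division_of S" and d: "\<And>c. d {c..c} = 0"
  shows "(\<Sum>(x,K)\<in>p. d K) = (\<Sum>K\<in>snd ` p. d K)"
proof -
  define d' where "d' K = (if K = {} then 0 else d K)" for K
  have nonempty: "K \<noteq> {}" if "(x, K) \<in> p" for x K
    using tagged_partial_division_ofD(2)[OF p that] by blast
  have "p tagged_division_of \<Union>(snd ` p)" using tagged_partial_division_of_Union_self[OF p] .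
  hence "(\<Sum>(x,K)\<in>p. d' K) = (\<Sum>K\<in>snd ` p. d' K)"
  proof (rule sum.over_tagged_division_lemma)
    fix u v :: real assume "box u v = {}"
    hence "v < u \<or> v = u" by auto
    thus "d' (cbox u v) = 0" using d by (auto simp: d'_def)
  qed
  moreover have "(\<Sum>(x,K)\<in>p. d' K) = (\<Sum>(x,K)\<in>p. d K)"
    using nonempty by (intro sum.cong) (auto simp: d'_def)
  moreover have "(\<Sum>K\<in>snd ` p. d' K) = (\<Sum>K\<in>snd ` p. d K)"
    using nonempty by (intro sum.cong) (auto simp: d'_def)
  ultimately show ?thesis by simp
qed

lemma abs_cont_on_tagged_partial_division:
  assumes f: "abs_cont_on a b f" and "\<epsilon> > 0"
  shows "\<exists>\<delta>>0. \<forall>p. p tagged_partial_division_of {a..b} \<longrightarrow> measure lebesgue (\<Union>(snd ` p)) < \<delta> \<longrightarrow>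
           \<bar>\<Sum>(x,K)\<in>p. f (Sup K) - f (Inf K)\<bar> < \<epsilon>"
proof -
  obtain \<delta> where "\<delta> > 0" and \<delta>: "\<forall>\<D> S. \<D> division_of S \<longrightarrow> S \<subseteq> {a..b} \<longrightarrow>
      measure lebesgue S < \<delta> \<longrightarrow> (\<Sum>K\<in>\<D>. \<bar>f (Sup K) - f (Inf K)\<bar>) < \<epsilon>"
    using abs_cont_on_division[OF f \<open>\<epsilon> > 0\<close>] by blast
  have "\<bar>\<Sum>(x,K)\<in>p. f (Sup K) - f (Inf K)\<bar> < \<epsilon>"
    if p: "p tagged_partial_division_of {a..b}" and small: "measure lebesgue (\<Union>(snd ` p)) < \<delta>" for p
  proof -
    have "\<bar>\<Sum>(x,K)\<in>p. f (Sup K) - f (Inf K)\<bar> \<le> (\<Sum>(x,K)\<in>p. \<bar>f (Sup K) - f (Inf K)\<bar>)"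
      by (rule sum_abs[THEN order_trans]) (simp add: case_prod_unfold)
    also have "\<dots> = (\<Sum>K\<in>snd ` p. \<bar>f (Sup K) - f (Inf K)\<bar>)"
      using sum_tagged_partial_division_real[OF p, of "\<lambda>K. \<bar>f (Sup K) - f (Inf K)\<bar>"] by simp
    also have "\<dots> < \<epsilon>"
    proof -
      have "snd ` p division_of \<Union>(snd ` p)" using partial_division_of_tagged_division[OF p] .
      moreover have "\<Union>(snd ` p) \<subseteq> {a..b}" using tagged_partial_division_ofD(3)[OF p] by fastforce
      ultimately show ?thesis using \<delta> small by blast
    qed
    finally show ?thesis .
  qed
  thus ?thesis using \<open>\<delta> > 0\<close> by blast
qed

lemma negligible_open_superset:
  assumes N: "negligible N" and "e > 0"
  obtains T where "open T" "N \<subseteq> T" "T \<in> lmeasurable" "measure lebesgue T < e"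
proof -
  obtain T where T: "open T" "N \<subseteq> T" "T - N \<in> lmeasurable" "emeasure lebesgue (T - N) < ennreal e"
    using sets_lebesgue_outer_open[OF negligible_imp_sets[OF N] \<open>e > 0\<close>] by blast
  have NT: "T = (T - N) \<union> N" using T(2) by blast
  have "T \<in> lmeasurable" using T(3) negligible_imp_measurable[OF N] NT by (metis fmeasurable.Un)
  moreover have "measure lebesgue T < e"
  proof -
    have "measure lebesgue T \<le> measure lebesgue (T - N) + measure lebesgue N"
      using T(3) negligible_imp_sets[OF N] NT by (metis fmeasurableD measure_Un_le)
    also have "\<dots> < e"
      using T(3,4) negligible_imp_measure0[OF N] \<open>e > 0\<close> by (simp add: emeasure_eq_measure2 ennreal_less_iff)
    finally show ?thesis .
  qed
  ultimately show ?thesis using that T(1,2) by blast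
qed

lemma has_real_derivative_zero_local_bound:
  assumes "(f has_real_derivative 0) (at x)" and "\<epsilon> > 0"
  shows "\<exists>\<rho>>0. \<forall>y. \<bar>y - x\<bar> < \<rho> \<longrightarrow> \<bar>f y - f x\<bar> \<le> \<epsilon> * \<bar>y - x\<bar>"
proof -
  have "(f has_derivative (*) 0) (at x)"
    using assms(1) by (simp add: has_field_derivative_def)
  hence "\<forall>e>0. \<exists>d>0. \<forall>y. norm (y - x) < d \<longrightarrow> norm (f y - f x - 0 * (y - x)) \<le> e * norm (y - x)"
    unfolding has_derivative_at_alt by blast
  thus ?thesis using assms(2) by simp
qed

lemma sum_increments_le_local_bound:
  fixes f :: "real \<Rightarrow> real"
  assumes P: "P tagged_division_of {a..b}" and "a \<le> b" and "Q \<subseteq> P" and "\<epsilon> \<ge> 0"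
    and local: "\<And>x K y. (x, K) \<in> Q \<Longrightarrow> y \<in> K \<Longrightarrow> \<bar>f y - f x\<bar> \<le> \<epsilon> * \<bar>y - x\<bar>"
  shows "\<bar>\<Sum>(x,K)\<in>Q. f (Sup K) - f (Inf K)\<bar> \<le> \<epsilon> * (b - a)"
proof -
  have finP: "finite P" using tagged_division_of_finite[OF P] .
  have "\<bar>f (Sup K) - f (Inf K)\<bar> \<le> \<epsilon> * measure lborel K" if xK: "(x, K) \<in> Q" for x K
  proof -
    have "(x, K) \<in> P" using xK \<open>Q \<subseteq> P\<close> by blast
    then obtain c d where K: "K = {c..d}" and "x \<in> K"
      using tagged_division_ofD(2,4)[OF P] by (metis box_real(2))
    hence cd: "c \<le> x" "x \<le> d" by auto
    have "\<bar>f d - f c\<bar> \<le> \<bar>f d - f x\<bar> + \<bar>f c - f x\<bar>" by linarith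
    also have "\<dots> \<le> \<epsilon> * (d - x) + \<epsilon> * (x - c)"
      using local[OF xK, of d] local[OF xK, of c] K cd by auto
    also have "\<dots> = \<epsilon> * measure lborel K" using K cd by (simp add: algebra_simps)
    finally show ?thesis using K cd by simp
  qed
  hence "\<bar>\<Sum>(x,K)\<in>Q. f (Sup K) - f (Inf K)\<bar> \<le> (\<Sum>(x,K)\<in>Q. \<epsilon> * measure lborel K)"
    by (intro sum_abs[THEN order_trans] sum_mono) (auto simp: case_prod_unfold)
  also have "\<dots> \<le> (\<Sum>(x,K)\<in>P. \<epsilon> * measure lborel K)"
    using finP \<open>Q \<subseteq> P\<close> \<open>\<epsilon> \<ge> 0\<close> by (intro sum_mono2) auto
  also have "\<dots> = \<epsilon> * (b - a)"
    using additive_content_tagged_division[of P a b] P \<open>a \<le> b\<close>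
    by (simp add: sum_distrib_left[symmetric] case_prod_unfold)
  finally show ?thesis .
qed

lemma deriv_zero_ae_gauge:
  fixes f :: "real \<Rightarrow> real"
  assumes "open T" "N \<subseteq> T" and f': "\<And>x. x \<in> S - N \<Longrightarrow> (f has_real_derivative 0) (at x)"
    and "\<epsilon> > 0"
  shows "\<exists>\<rho>. (\<forall>x. 0 < \<rho> x) \<and> (\<forall>x\<in>N. ball x (\<rho> x) \<subseteq> T) \<and>
           (\<forall>x\<in>S - N. \<forall>y. \<bar>y - x\<bar> < \<rho> x \<longrightarrow> \<bar>f y - f x\<bar> \<le> \<epsilon> * \<bar>y - x\<bar>)"
proof -
  have "\<exists>r>0. (x \<in> N \<longrightarrow> ball x r \<subseteq> T) \<and>
      (x \<in> S - N \<longrightarrow> (\<forall>y. \<bar>y - x\<bar> < r \<longrightarrow> \<bar>f y - f x\<bar> \<le> \<epsilon> * \<bar>y - x\<bar>))" for x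
  proof (cases "x \<in> N")
    case True
    then obtain r where "r > 0" "ball x r \<subseteq> T" using assms(1,2) open_contains_ball by blast
    thus ?thesis using True by blast
  next
    case False
    show ?thesis
    proof (cases "x \<in> S")
      case True
      thus ?thesis using has_real_derivative_zero_local_bound[OF f' \<open>\<epsilon> > 0\<close>] False by blast
    next
      case outside: False
      show ?thesis using False outside by (intro exI[of _ 1]) auto
    qed
  qed
  then obtain \<rho> where "\<forall>x. 0 < \<rho> x \<and> (x \<in> N \<longrightarrow> ball x (\<rho> x) \<subseteq> T) \<and>
      (x \<in> S - N \<longrightarrow> (\<forall>y. \<bar>y - x\<bar> < \<rho> x \<longrightarrow> \<bar>f y - f x\<bar> \<le> \<epsilon> * \<bar>y - x\<bar>))"
    by metis
  thus ?thesis by blast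
qed

lemma fine_tagged_division_restrict_tags:
  fixes P :: "(real \<times> real set) set"
  assumes P: "P tagged_division_of {a..b}" and fine: "(\<lambda>x. ball x (\<rho> x)) fine P"
    and N: "\<And>x. x \<in> N \<Longrightarrow> ball x (\<rho> x) \<subseteq> T" and "T \<in> lmeasurable"
  shows "{(x, K) \<in> P. x \<in> N} tagged_partial_division_of {a..b}"
    and "measure lebesgue (\<Union>(snd ` {(x, K) \<in> P. x \<in> N})) \<le> measure lebesgue T"
proof -
  have "P tagged_partial_division_of {a..b}" using P by (simp add: tagged_division_of_def)
  moreover have "{(x, K) \<in> P. x \<in> N} \<subseteq> P" by auto
  ultimately show p: "{(x, K) \<in> P. x \<in> N} tagged_partial_division_of {a..b}"
    by (rule tagged_partial_division_subset)
  have "\<Union>(snd ` {(x, K) \<in> P. x \<in> N}) \<subseteq> T" using fine N by (fastforce simp: fine_def)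
  moreover have "\<Union>(snd ` {(x, K) \<in> P. x \<in> N}) \<in> lmeasurable"
    using lmeasurable_division[OF partial_division_of_tagged_division[OF p]] .
  ultimately show "measure lebesgue (\<Union>(snd ` {(x, K) \<in> P. x \<in> N})) \<le> measure lebesgue T"
    using \<open>T \<in> lmeasurable\<close> by (auto intro: measure_mono_fmeasurable dest: fmeasurableD)
qed

lemma abs_cont_on_deriv_zero_ae_bound:
  fixes f :: "real \<Rightarrow> real"
  assumes "a \<le> b" and f: "abs_cont_on a b f" and N: "negligible N"
    and f': "\<And>t. t \<in> {a<..<b} - N \<Longrightarrow> (f has_real_derivative 0) (at t)" and "\<epsilon> > 0"
  shows "\<bar>f b - f a\<bar> \<le> \<epsilon> * (b - a + 1)"
proof -
  obtain \<delta> where "\<delta> > 0" and \<delta>: "\<forall>p. p tagged_partial_division_of {a..b} \<longrightarrow>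
      measure lebesgue (\<Union>(snd ` p)) < \<delta> \<longrightarrow> \<bar>\<Sum>(x,K)\<in>p. f (Sup K) - f (Inf K)\<bar> < \<epsilon>"
    using abs_cont_on_tagged_partial_division[OF f \<open>\<epsilon> > 0\<close>] by blast
  define N' where "N' = insert a (insert b N)"
  have "negligible N'" using N by (simp add: N'_def)
  then obtain T where T: "open T" "N' \<subseteq> T" "T \<in> lmeasurable" "measure lebesgue T < \<delta>"
    using \<open>\<delta> > 0\<close> by (rule negligible_open_superset)
  have "\<And>x. x \<in> {a..b} - N' \<Longrightarrow> (f has_real_derivative 0) (at x)" using f' by (auto simp: N'_def)
  then obtain \<rho> where \<rho>: "\<forall>x. 0 < \<rho> x" "\<forall>x\<in>N'. ball x (\<rho> x) \<subseteq> T"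
    "\<forall>x\<in>{a..b} - N'. \<forall>y. \<bar>y - x\<bar> < \<rho> x \<longrightarrow> \<bar>f y - f x\<bar> \<le> \<epsilon> * \<bar>y - x\<bar>"
    using deriv_zero_ae_gauge[OF T(1,2) _ \<open>\<epsilon> > 0\<close>] by blast
  have "gauge (\<lambda>x. ball x (\<rho> x))" using \<rho>(1) by (rule gauge_ball_dependent)
  then obtain P where P: "P tagged_division_of {a..b}" and fine: "(\<lambda>x. ball x (\<rho> x)) fine P"
    using fine_division_exists_real by blast
  \<comment> \<open>Cousin's lemma: at tags outside N' f is almost flat, tags in N' carry intervals inside T\<close>
  define P1 where "P1 = {(x, K) \<in> P. x \<in> N'}"
  have "P1 \<subseteq> P" by (auto simp: P1_def)
  have "\<bar>\<Sum>(x,K)\<in>P - P1. f (Sup K) - f (Inf K)\<bar> \<le> \<epsilon> * (b - a)"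
  proof (rule sum_increments_le_local_bound[OF P \<open>a \<le> b\<close>])
    fix x K y assume "(x, K) \<in> P - P1" and "y \<in> K"
    hence xK: "(x, K) \<in> P" "x \<notin> N'" by (auto simp: P1_def)
    hence "x \<in> {a..b}" "K \<subseteq> ball x (\<rho> x)"
      using tagged_division_ofD(2,3)[OF P xK(1)] fine by (auto simp: fine_def)
    hence "x \<in> {a..b} - N'" "\<bar>y - x\<bar> < \<rho> x" using xK(2) \<open>y \<in> K\<close> by (auto simp: dist_real_def)
    thus "\<bar>f y - f x\<bar> \<le> \<epsilon> * \<bar>y - x\<bar>" using \<rho>(3) by blast
  qed (use \<open>\<epsilon> > 0\<close> in auto)
  moreover have "\<bar>\<Sum>(x,K)\<in>P1. f (Sup K) - f (Inf K)\<bar> < \<epsilon>"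
  proof -
    have "P1 tagged_partial_division_of {a..b}" "measure lebesgue (\<Union>(snd ` P1)) \<le> measure lebesgue T"
      using fine_tagged_division_restrict_tags[OF P fine _ T(3), of N'] \<rho>(2) unfolding P1_def by auto
    thus ?thesis using \<delta> T(4) by auto
  qed
  moreover have "f b - f a = (\<Sum>(x,K)\<in>P - P1. f (Sup K) - f (Inf K)) + (\<Sum>(x,K)\<in>P1. f (Sup K) - f (Inf K))"
    using additive_tagged_division_1[OF \<open>a \<le> b\<close> P, of f]
      sum.subset_diff[OF \<open>P1 \<subseteq> P\<close> tagged_division_of_finite[OF P], of "\<lambda>(x, K). f (Sup K) - f (Inf K)"]
    by linarith
  ultimately show ?thesis by (simp add: algebra_simps)
qed

lemma abs_cont_on_deriv_zero_ae_imp_eq: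
  fixes f :: "real \<Rightarrow> real"
  assumes "a \<le> b" and "abs_cont_on a b f" and "negligible N"
    and "\<And>t. t \<in> {a<..<b} - N \<Longrightarrow> (f has_real_derivative 0) (at t)"
  shows "f b = f a"
proof (rule ccontr)
  assume "f b \<noteq> f a"
  define \<epsilon> where "\<epsilon> = \<bar>f b - f a\<bar> / (2 * (b - a + 1))"
  have "\<epsilon> > 0" using \<open>f b \<noteq> f a\<close> \<open>a \<le> b\<close> by (simp add: \<epsilon>_def)
  have "\<bar>f b - f a\<bar> \<le> \<epsilon> * (b - a + 1)"
    using abs_cont_on_deriv_zero_ae_bound[OF assms \<open>\<epsilon> > 0\<close>] .
  also have "\<dots> = \<bar>f b - f a\<bar> / 2" using \<open>a \<le> b\<close> by (simp add: \<epsilon>_def field_simps)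
  finally show False using \<open>f b \<noteq> f a\<close> by simp
qed

lemma abs_cont_on_deriv_ae_continuous:
  fixes f \<psi> :: "real \<Rightarrow> real"
  assumes f: "abs_cont_on a b f" and "a \<le> p" "q \<le> b" and N: "negligible N"
    and f': "\<And>t. t \<in> {p<..<q} - N \<Longrightarrow> (f has_real_derivative \<psi> t) (at t)"
    and \<psi>: "continuous_on {p..q} \<psi>"
  shows "\<And>t. t \<in> {p<..<q} \<Longrightarrow> (f has_real_derivative \<psi> t) (at t)"
proof -
  define \<Phi> where "\<Phi> t = integral {p..t} \<psi>" for t
  have \<Phi>: "(\<Phi> has_real_derivative \<psi> t) (at t within {p..q})" if "t \<in> {p..q}" for t
    unfolding \<Phi>_def using \<psi> that by (rule integral_has_real_derivative)
  have \<Phi>_at: "(\<Phi> has_real_derivative \<psi> t) (at t)" if "t \<in> {p<..<q}" for t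
    using \<Phi>[of t] that by (simp add: at_within_Icc_at)
  obtain B where "B \<ge> 0" and B: "\<And>t. t \<in> {p..q} \<Longrightarrow> norm (\<psi> t) \<le> B"
    by (rule continuous_on_compact_bound[OF compact_Icc \<psi>]) blast
  have "B-lipschitz_on {p..q} \<Phi>"
  proof (rule lipschitz_onI)
    fix x y assume "x \<in> {p..q}" "y \<in> {p..q}"
    thus "dist (\<Phi> x) (\<Phi> y) \<le> B * dist x y"
      using field_differentiable_bound[OF convex_real_interval(5) \<Phi> B] by (simp add: dist_norm)
  qed (rule \<open>B \<ge> 0\<close>)
  hence D: "abs_cont_on p q (\<lambda>t. f t - \<Phi> t)"
    by (intro abs_cont_on_diff_lipschitz abs_cont_on_subinterval[OF f \<open>a \<le> p\<close> \<open>q \<le> b\<close>])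
  \<comment> \<open>f minus a primitive of \<psi> is absolutely continuous with derivative 0 a.e., hence constant\<close>
  have const: "f t - \<Phi> t = f p - \<Phi> p" if "t \<in> {p..q}" for t
  proof (rule abs_cont_on_deriv_zero_ae_imp_eq[of p t "\<lambda>t. f t - \<Phi> t" N])
    show "p \<le> t" "abs_cont_on p t (\<lambda>t. f t - \<Phi> t)"
      using that abs_cont_on_subinterval[OF D] by auto
    show "negligible N" by (rule N)
    fix s assume "s \<in> {p<..<t} - N"
    hence "s \<in> {p<..<q} - N" using that by auto
    hence "((\<lambda>t. f t - \<Phi> t) has_real_derivative \<psi> s - \<psi> s) (at s)"
      using f' \<Phi>_at by (intro DERIV_diff) auto
    thus "((\<lambda>t. f t - \<Phi> t) has_real_derivative 0) (at s)" by simp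
  qed
  fix t assume t: "t \<in> {p<..<q}"
  have "((\<lambda>s. f p - \<Phi> p + \<Phi> s) has_real_derivative \<psi> t) (at t)"
    using DERIV_add[OF DERIV_const \<Phi>_at[OF t]] by simp
  moreover have "f p - \<Phi> p + \<Phi> s = f s" if "s \<in> {p<..<q}" for s
    using const[of s] that by simp
  ultimately show "(f has_real_derivative \<psi> t) (at t)"
    using has_field_derivative_transform_within_open[OF _ open_greaterThanLessThan t] by blast
qed

lemma nonneg_by_barrier:
  fixes h :: "real \<Rightarrow> real"
  assumes "a \<le> b" and hc: "continuous_on {a..b} h" and "h a \<ge> 0" and "c > 0"
    and barrier: "\<And>t. t \<in> {a<..<b} \<Longrightarrow> -c < h t \<Longrightarrow> h t < 0 \<Longrightarrow>
                    \<exists>d. (h has_real_derivative d) (at t) \<and> d \<ge> 0"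
    and t: "t \<in> {a..b}"
  shows "h t \<ge> 0"
proof (rule ccontr)
  assume "\<not> h t \<ge> 0"
  define Z where "Z = {a..t} \<inter> h -` {0..}"
  have "continuous_on {a..t} h" by (rule continuous_on_subset[OF hc]) (use t in auto)
  hence "closed Z" unfolding Z_def by (rule continuous_closed_preimage) auto
  moreover have "a \<in> Z" "bdd_above Z" using \<open>h a \<ge> 0\<close> t by (auto simp: Z_def intro: bdd_aboveI[of _ t])
  ultimately have "Sup Z \<in> Z" using closed_contains_Sup by blast
  define s where "s = Sup Z"
  have s: "a \<le> s" "s \<le> t" "h s \<ge> 0" using \<open>Sup Z \<in> Z\<close> by (auto simp: Z_def s_def)
  with \<open>\<not> h t \<ge> 0\<close> have "s < t" by (cases "s = t") auto
  have neg: "h x < 0" if "s < x" "x \<le> t" for x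
  proof (rule ccontr)
    assume "\<not> h x < 0"
    hence "x \<in> Z" using that s by (auto simp: Z_def)
    hence "x \<le> s" unfolding s_def using \<open>bdd_above Z\<close> by (rule cSup_upper)
    thus False using that by simp
  qed
  \<comment> \<open>right after s, the last point of [a, t] with h \<ge> 0, h stays in the band (-c, 0),
    where it cannot decrease\<close>
  have "continuous (at s within {a..b}) h"
    using hc s t by (simp add: continuous_on_eq_continuous_within)
  then obtain d where "d > 0" and d: "\<And>x. x \<in> {a..b} \<Longrightarrow> dist x s < d \<Longrightarrow> dist (h x) (h s) < c"
    using \<open>c > 0\<close> unfolding continuous_within_eps_delta by blast
  define t' where "t' = min t (s + d/2)"
  have t': "s < t'" "t' \<le> t" using \<open>s < t\<close> \<open>d > 0\<close> by (auto simp: t'_def)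
  have "h s \<le> h t'"
  proof (rule DERIV_nonneg_imp_increasing_open[of s t' h])
    show "continuous_on {s..t'} h" by (rule continuous_on_subset[OF hc]) (use s t t' in auto)
    fix x assume x: "s < x" "x < t'"
    hence "x \<in> {a<..<b}" "x \<in> {a..b}" "dist x s < d" using s t t' by (auto simp: dist_real_def t'_def)
    moreover have "h x < 0" using neg x t' by auto
    ultimately have "-c < h x" "h x < 0" using d[of x] s(3) by (auto simp: dist_real_def)
    thus "\<exists>y. (h has_real_derivative y) (at x) \<and> y \<ge> 0" using barrier \<open>x \<in> {a<..<b}\<close> by blast
  qed (use t' in simp)
  moreover have "h t' < 0" using neg t' by auto
  ultimately show False using s(3) by linarith
qed

lemma ge_linear_by_barrier:
  fixes z :: "real \<Rightarrow> real"
  assumes "p \<le> q" and "continuous_on {p..q} z" and "y \<le> z p" and "c > 0"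
    and band: "\<And>t. t \<in> {p<..<q} \<Longrightarrow> y + m * (t - p) - c < z t \<Longrightarrow> z t < y + m * (t - p) \<Longrightarrow>
                 \<exists>d. (z has_real_derivative d) (at t) \<and> m \<le> d"
    and "t \<in> {p..q}"
  shows "y + m * (t - p) \<le> z t"
proof -
  have "0 \<le> z t - (y + m * (t - p))"
  proof (rule nonneg_by_barrier[where h = "\<lambda>t. z t - (y + m * (t - p))"])
    fix s assume "s \<in> {p<..<q}" "- c < z s - (y + m * (s - p))" "z s - (y + m * (s - p)) < 0"
    then obtain d where zd: "(z has_real_derivative d) (at s)" and "m \<le> d" using band[of s] by auto
    have "((\<lambda>t. y + m * (t - p)) has_real_derivative m) (at s)"
      by (auto intro!: derivative_eq_intros)
    with zd have "((\<lambda>t. z t - (y + m * (t - p))) has_real_derivative d - m) (at s)" by (rule DERIV_diff)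
    thus "\<exists>d. ((\<lambda>t. z t - (y + m * (t - p))) has_real_derivative d) (at s) \<and> 0 \<le> d"
      using \<open>m \<le> d\<close> by auto
  qed (use assms in \<open>auto intro!: continuous_intros\<close>)
  thus ?thesis by simp
qed

lemma le_linear_by_barrier:
  fixes z :: "real \<Rightarrow> real"
  assumes "p \<le> q" and "continuous_on {p..q} z" and "z p \<le> y" and "c > 0"
    and band: "\<And>t. t \<in> {p<..<q} \<Longrightarrow> y + m * (t - p) < z t \<Longrightarrow> z t < y + m * (t - p) + c \<Longrightarrow>
                 \<exists>d. (z has_real_derivative d) (at t) \<and> d \<le> m"
    and "t \<in> {p..q}"
  shows "z t \<le> y + m * (t - p)"
proof -
  have "- y + (- m) * (t - p) \<le> - z t"
  proof (rule ge_linear_by_barrier[where z = "\<lambda>t. - z t"])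
    show "continuous_on {p..q} (\<lambda>t. - z t)" using assms(2) by (rule continuous_on_minus)
    fix s assume "s \<in> {p<..<q}" "- y + - m * (s - p) - c < - z s" "- z s < - y + - m * (s - p)"
    then obtain d where "(z has_real_derivative d) (at s)" "d \<le> m" using band[of s] by (auto simp: algebra_simps)
    thus "\<exists>d. ((\<lambda>t. - z t) has_real_derivative d) (at s) \<and> - m \<le> d"
      using DERIV_minus by fastforce
  qed (use assms in auto)
  thus ?thesis by (simp add: algebra_simps)
qed

definition riccati_ge :: "real \<Rightarrow> real \<Rightarrow> real \<Rightarrow> (real \<Rightarrow> real) \<Rightarrow> bool" where
  "riccati_ge c p q z \<longleftrightarrow> continuous_on {p..q} z \<and>
     (\<forall>t\<in>{p<..<q}. \<exists>d. (z has_real_derivative d) (at t) \<and> c - (z t)\<^sup>2 \<le> d)"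

definition riccati_le :: "real \<Rightarrow> real \<Rightarrow> real \<Rightarrow> (real \<Rightarrow> real) \<Rightarrow> bool" where
  "riccati_le c p q z \<longleftrightarrow> continuous_on {p..q} z \<and>
     (\<forall>t\<in>{p<..<q}. \<exists>d. (z has_real_derivative d) (at t) \<and> d \<le> c + (z t)\<^sup>2 / 3)"

lemma riccati_ge_lower_from_zero:
  assumes "p < q" "q - p \<le> 1" "lam > 0" and z: "riccati_ge lam p q z" and "0 \<le> z p"
  shows "min (lam * (q - p) / 2) (1/2) \<le> z q"
proof -
  define s where "s = min (lam * (q - p) / 2) (1/2)"
  have s: "0 < s" "s \<le> lam * (q - p) / 2" "s \<le> 1/2" using assms(1,3) by (auto simp: s_def)
  have "0 + s / (q - p) * (q - p) \<le> z q"
  proof (rule ge_linear_by_barrier[where c = s])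
    show "continuous_on {p..q} z" using z by (simp add: riccati_ge_def)
    fix t assume t: "t \<in> {p<..<q}" and lower: "0 + s / (q - p) * (t - p) - s < z t"
      and upper: "z t < 0 + s / (q - p) * (t - p)"
    have "s / (q - p) * (t - p) \<le> s" using t s \<open>p < q\<close> by (auto simp: field_simps mult_left_le)
    moreover have "0 \<le> s / (q - p) * (t - p)" using t s \<open>p < q\<close> by auto
    ultimately have "\<bar>z t\<bar> \<le> \<bar>s\<bar>" using lower upper by linarith
    hence "(z t)\<^sup>2 \<le> s * s" by (simp only: abs_le_square_iff power2_eq_square)
    also have "\<dots> \<le> (lam * (q - p) / 2) * (1/2)" using s by (intro mult_mono) auto
    also have "\<dots> \<le> lam / 4" using \<open>q - p \<le> 1\<close> \<open>lam > 0\<close> by simp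
    finally have "(z t)\<^sup>2 \<le> lam / 4" .
    moreover have "s / (q - p) \<le> lam / 2" using s(2) \<open>p < q\<close> by (simp add: pos_divide_le_eq algebra_simps)
    ultimately have "s / (q - p) \<le> lam - (z t)\<^sup>2" using \<open>lam > 0\<close> by linarith
    thus "\<exists>d. (z has_real_derivative d) (at t) \<and> s / (q - p) \<le> d"
      using z t unfolding riccati_ge_def by force
  qed (use \<open>p < q\<close> \<open>0 \<le> z p\<close> s in auto)
  thus ?thesis using \<open>p < q\<close> by (simp add: s_def)
qed

lemma riccati_le_upper_from_zero:
  assumes "p \<le> q" "0 \<le> lam" "(lam + 1/3) * (q - p) \<le> 1/2" and z: "riccati_le lam p q z"
    and "z p \<le> 0"
  shows "z q \<le> 1/2"
proof -
  have "z q \<le> 0 + (lam + 1/3) * (q - p)"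
  proof (rule le_linear_by_barrier[where c = "1/2"])
    show "continuous_on {p..q} z" using z by (simp add: riccati_le_def)
    fix t assume t: "t \<in> {p<..<q}" and lower: "0 + (lam + 1/3) * (t - p) < z t"
      and upper: "z t < 0 + (lam + 1/3) * (t - p) + 1/2"
    have "(lam + 1/3) * (t - p) \<le> (lam + 1/3) * (q - p)"
      using t \<open>0 \<le> lam\<close> by (intro mult_left_mono) auto
    moreover have "0 \<le> (lam + 1/3) * (t - p)" using t \<open>0 \<le> lam\<close> by auto
    ultimately have "\<bar>z t\<bar> \<le> 1" using lower upper \<open>(lam + 1/3) * (q - p) \<le> 1/2\<close> by linarith
    hence "lam + (z t)\<^sup>2 / 3 \<le> lam + 1/3" by (simp add: abs_square_le_1)
    thus "\<exists>d. (z has_real_derivative d) (at t) \<and> d \<le> lam + 1/3"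
      using z t unfolding riccati_le_def by force
  qed (use assms in auto)
  thus ?thesis using assms(3) by linarith
qed

lemma riccati_ge_stays_positive:
  assumes "p \<le> q" "q - p < 1" "0 < s" "s \<le> 1/2" "mu \<le> s / 2" and z: "riccati_ge (- mu) p q z"
    and "s \<le> z p"
  shows "0 < z q"
proof -
  define c where "c = s * (1 - (q - p))"
  have "c > 0" using assms(2,3) by (simp add: c_def)
  have "s + (- s) * (q - p) \<le> z q"
  proof (rule ge_linear_by_barrier[where c = c])
    show "continuous_on {p..q} z" using z by (simp add: riccati_ge_def)
    fix t assume t: "t \<in> {p<..<q}" and lower: "s + - s * (t - p) - c < z t"
      and upper: "z t < s + - s * (t - p)"
    have "s * (t - p) \<le> s * (q - p)" using t \<open>0 < s\<close> by (intro mult_left_mono) auto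
    hence "0 < z t" using lower by (simp add: c_def algebra_simps)
    moreover have "0 \<le> s * (t - p)" using t \<open>0 < s\<close> by simp
    hence "z t < s" using upper by linarith
    ultimately have "z t * z t \<le> s * (1/2)" using \<open>s \<le> 1/2\<close> by (intro mult_mono) auto
    hence "- s \<le> - mu - (z t)\<^sup>2" using \<open>mu \<le> s / 2\<close> by (simp add: power2_eq_square)
    thus "\<exists>d. (z has_real_derivative d) (at t) \<and> - s \<le> d"
      using z t unfolding riccati_ge_def by force
  qed (use assms \<open>c > 0\<close> in auto)
  thus ?thesis using \<open>c > 0\<close> by (simp add: c_def algebra_simps)
qed

lemma riccati_le_drops_below:
  assumes "3/2 \<le> mu" "4 / mu \<le> q - p" and z: "riccati_le (- mu) p q z" and "z p \<le> 1/2"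
  shows "z q \<le> -3/2"
proof -
  define T where "T = p + 4 / mu"
  have "p < T" "T \<le> q" using assms(1,2) by (auto simp: T_def)
  have zc: "continuous_on {p..q} z" using z by (simp add: riccati_le_def)
  have deriv: "\<exists>d. (z has_real_derivative d) (at t) \<and> d \<le> m"
    if "t \<in> {p<..<q}" "\<bar>z t\<bar> \<le> 3/2" "- mu + 3/4 \<le> m" for t m
  proof -
    have "\<bar>z t\<bar>\<^sup>2 \<le> (3/2)\<^sup>2" using that(2) by (rule power_mono) simp
    hence "- mu + (z t)\<^sup>2 / 3 \<le> m" using that(3) by (simp add: power_divide)
    thus ?thesis using z that(1) unfolding riccati_le_def by force
  qed
  \<comment> \<open>z falls at rate at least mu/2 until it reaches -3/2, and it cannot climb back above -3/2\<close>
  have "z T \<le> 1/2 + (- mu / 2) * (T - p)"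
  proof (rule le_linear_by_barrier[where c = 1])
    show "continuous_on {p..T} z" by (rule continuous_on_subset[OF zc]) (use \<open>T \<le> q\<close> in auto)
    fix t assume t: "t \<in> {p<..<T}" and lower: "1/2 + - mu / 2 * (t - p) < z t"
      and upper: "z t < 1/2 + - mu / 2 * (t - p) + 1"
    have "mu / 2 * (t - p) \<le> mu / 2 * (4 / mu)"
      using t assms(1) by (intro mult_left_mono) (auto simp: T_def)
    moreover have "0 \<le> mu / 2 * (t - p)" using t assms(1) by simp
    ultimately have "\<bar>z t\<bar> \<le> 3/2" using lower upper assms(1) by (simp add: abs_le_iff)
    thus "\<exists>d. (z has_real_derivative d) (at t) \<and> d \<le> - mu / 2"
      using deriv[of t] t \<open>T \<le> q\<close> assms(1) by auto
  qed (use \<open>p < T\<close> \<open>z p \<le> 1/2\<close> in auto)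
  hence "z T \<le> -3/2" using assms(1) by (simp add: T_def)
  have "z q \<le> -3/2 + 0 * (q - T)"
  proof (rule le_linear_by_barrier[where c = 1])
    show "continuous_on {T..q} z" by (rule continuous_on_subset[OF zc]) (use \<open>p < T\<close> in auto)
    fix t assume t: "t \<in> {T<..<q}" and "-3/2 + 0 * (t - T) < z t" "z t < -3/2 + 0 * (t - T) + 1"
    hence "\<bar>z t\<bar> \<le> 3/2" by auto
    thus "\<exists>d. (z has_real_derivative d) (at t) \<and> d \<le> 0"
      using deriv[of t] t \<open>p < T\<close> assms(1) by auto
  qed (use \<open>T \<le> q\<close> \<open>z T \<le> -3/2\<close> in auto)
  thus ?thesis by simp
qed

lemma continuous_on_reflect:
  fixes z :: "real \<Rightarrow> real"
  assumes "continuous_on {p..q} z"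
  shows "continuous_on {r - q..r - p} (\<lambda>t. - z (r - t))"
proof -
  have "continuous_on {r - q..r - p} (\<lambda>t. r - t)" by (intro continuous_intros)
  moreover have "(\<lambda>t. r - t) ` {r - q..r - p} \<subseteq> {p..q}" by auto
  ultimately show ?thesis using continuous_on_compose2[OF assms] by (intro continuous_on_minus) blast
qed

lemma has_real_derivative_reflect:
  fixes z :: "real \<Rightarrow> real"
  assumes "(z has_real_derivative d) (at (r - t))"
  shows "((\<lambda>t. - z (r - t)) has_real_derivative d) (at t)"
proof -
  have "((\<lambda>t. r - t) has_real_derivative -1) (at t)" by (auto intro!: derivative_eq_intros)
  from DERIV_minus[OF DERIV_chain2[OF assms this]] show ?thesis by simp
qed

lemma riccati_ge_reflect:
  assumes "riccati_ge c p q z"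
  shows "riccati_ge c (r - q) (r - p) (\<lambda>t. - z (r - t))"
  unfolding riccati_ge_def
proof (intro conjI ballI)
  show "continuous_on {r - q..r - p} (\<lambda>t. - z (r - t))"
    using assms by (intro continuous_on_reflect) (simp add: riccati_ge_def)
  fix t assume "t \<in> {r - q<..<r - p}"
  hence "r - t \<in> {p<..<q}" by auto
  then obtain d where "(z has_real_derivative d) (at (r - t))" "c - (z (r - t))\<^sup>2 \<le> d"
    using assms unfolding riccati_ge_def by blast
  thus "\<exists>d. ((\<lambda>t. - z (r - t)) has_real_derivative d) (at t) \<and> c - (- z (r - t))\<^sup>2 \<le> d"
    using has_real_derivative_reflect[of z d r t] by auto
qed

lemma riccati_le_reflect:
  assumes "riccati_le c p q z"
  shows "riccati_le c (r - q) (r - p) (\<lambda>t. - z (r - t))"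
  unfolding riccati_le_def
proof (intro conjI ballI)
  show "continuous_on {r - q..r - p} (\<lambda>t. - z (r - t))"
    using assms by (intro continuous_on_reflect) (simp add: riccati_le_def)
  fix t assume "t \<in> {r - q<..<r - p}"
  hence "r - t \<in> {p<..<q}" by auto
  then obtain d where "(z has_real_derivative d) (at (r - t))" "d \<le> c + (z (r - t))\<^sup>2 / 3"
    using assms unfolding riccati_le_def by blast
  thus "\<exists>d. ((\<lambda>t. - z (r - t)) has_real_derivative d) (at t) \<and> d \<le> c + (- z (r - t))\<^sup>2 / 3"
    using has_real_derivative_reflect[of z d r t] by auto
qed

lemma gnl_pos: "0 < s \<Longrightarrow> s < 1 \<Longrightarrow> 0 < gnl s"
  unfolding gnl_def by simp

lemma gnl_has_real_derivative: "(gnl has_real_derivative 2 * s - 3 * s\<^sup>2) (at s)"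
  unfolding gnl_def[abs_def]
  by (auto intro!: derivative_eq_intros simp: algebra_simps power2_eq_square)

lemma gnl_deriv_bounds:
  fixes s :: real
  assumes "0 < s" "s < 1"
  shows "-1 \<le> 2 * s - 3 * s\<^sup>2" "2 * s - 3 * s\<^sup>2 \<le> 1/3"
proof -
  have "(3 * s + 1) * (s - 1) \<le> 0" using assms by (intro mult_nonneg_nonpos) auto
  thus "-1 \<le> 2 * s - 3 * s\<^sup>2" by (simp add: algebra_simps power2_eq_square)
  have "0 \<le> 3 * (s - 1/3)\<^sup>2" by simp
  thus "2 * s - 3 * s\<^sup>2 \<le> 1/3" by (simp add: algebra_simps power2_eq_square)
qed

lemma riccati_quotient_has_real_derivative:
  fixes v v' :: "real \<Rightarrow> real"
  assumes vd: "(v has_real_derivative v' t) (at t)"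
    and v'd: "(v' has_real_derivative - (c * gnl (v t))) (at t)"
    and "0 < v t" "v t < 1"
  shows "((\<lambda>s. - v' s / gnl (v s)) has_real_derivative
           c + (2 * v t - 3 * (v t)\<^sup>2) * (- v' t / gnl (v t))\<^sup>2) (at t)"
proof -
  have g: "gnl (v t) \<noteq> 0" using gnl_pos assms(3,4) by (metis less_irrefl)
  have "((\<lambda>s. gnl (v s)) has_real_derivative (2 * v t - 3 * (v t)\<^sup>2) * v' t) (at t)"
    using DERIV_chain2[OF gnl_has_real_derivative vd] .
  from DERIV_divide[OF DERIV_minus[OF v'd] this g]
  show ?thesis using g by (simp add: field_simps power2_eq_square)
qed

lemma riccati_quotient:
  fixes v v' :: "real \<Rightarrow> real"
  assumes vc: "continuous_on {p..q} v" and v'c: "continuous_on {p..q} v'"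
    and vd: "\<And>t. t \<in> {p<..<q} \<Longrightarrow> (v has_real_derivative v' t) (at t)"
    and v'd: "\<And>t. t \<in> {p<..<q} \<Longrightarrow> (v' has_real_derivative - (c * gnl (v t))) (at t)"
    and range: "\<And>t. t \<in> {p..q} \<Longrightarrow> 0 < v t \<and> v t < 1"
  shows "riccati_ge c p q (\<lambda>t. - v' t / gnl (v t))" "riccati_le c p q (\<lambda>t. - v' t / gnl (v t))"
proof -
  define z where "z t = - v' t / gnl (v t)" for t
  have "continuous_on {p..q} (\<lambda>t. gnl (v t))" unfolding gnl_def by (intro continuous_intros vc)
  moreover have "\<forall>t\<in>{p..q}. gnl (v t) \<noteq> 0" using gnl_pos range by force
  ultimately have "continuous_on {p..q} z" unfolding z_def by (intro continuous_intros v'c)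
  moreover have "\<exists>d. (z has_real_derivative d) (at t) \<and> c - (z t)\<^sup>2 \<le> d \<and> d \<le> c + (z t)\<^sup>2 / 3"
    if t: "t \<in> {p<..<q}" for t
  proof (intro exI conjI)
    have v: "0 < v t" "v t < 1" using range[of t] t by auto
    show "(z has_real_derivative c + (2 * v t - 3 * (v t)\<^sup>2) * (z t)\<^sup>2) (at t)"
      unfolding z_def using vd[OF t] v'd[OF t] v by (rule riccati_quotient_has_real_derivative)
    show "c - (z t)\<^sup>2 \<le> c + (2 * v t - 3 * (v t)\<^sup>2) * (z t)\<^sup>2"
      using mult_right_mono[OF gnl_deriv_bounds(1)[OF v], of "(z t)\<^sup>2"] by simp
    show "c + (2 * v t - 3 * (v t)\<^sup>2) * (z t)\<^sup>2 \<le> c + (z t)\<^sup>2 / 3"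
      using mult_right_mono[OF gnl_deriv_bounds(2)[OF v], of "(z t)\<^sup>2"] by simp
  qed
  ultimately show "riccati_ge c p q z" "riccati_le c p q z"
    unfolding riccati_ge_def riccati_le_def by blast+
qed

lemma is_solution_classical:
  assumes "is_solution \<sigma> lam mu u"
  obtains u' where "continuous_on {0..1} u" "continuous_on {0..1} u'"
    "\<And>t. t \<in> {0<..<1} \<Longrightarrow> (u has_real_derivative u' t) (at t)"
    "\<And>p q c t. 0 \<le> p \<Longrightarrow> q \<le> 1 \<Longrightarrow> (\<And>s. s \<in> {p<..<q} \<Longrightarrow> aw \<sigma> lam mu s = c) \<Longrightarrow> t \<in> {p<..<q} \<Longrightarrow>
       (u' has_real_derivative - (c * gnl (u t))) (at t)"
    "\<And>t. t \<in> {0..1} \<Longrightarrow> 0 < u t \<and> u t < 1" "u' 0 = 0" "u' 1 = 0"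
proof -
  obtain u' where ud: "\<forall>t\<in>{0..1}. (u has_real_derivative u' t) (at t within {0..1})"
    and u'c: "continuous_on {0..1} u'" and ac: "abs_cont_on 0 1 u'"
    and range: "\<forall>t\<in>{0..1}. 0 < u t \<and> u t < 1"
    and ae: "AE t in lborel. t \<in> {0<..<1} \<longrightarrow>
               (u' has_real_derivative - (aw \<sigma> lam mu t * gnl (u t))) (at t)"
    and "u' 0 = 0" "u' 1 = 0"
    using assms unfolding is_solution_def by blast
  from ae obtain N where N0: "{t \<in> space lborel. \<not> (t \<in> {0<..<1} \<longrightarrow>
      (u' has_real_derivative - (aw \<sigma> lam mu t * gnl (u t))) (at t))} \<subseteq> N"
    and "emeasure lborel N = 0" "N \<in> sets lborel"
    by (rule AE_E)
  from \<open>emeasure lborel N = 0\<close> \<open>N \<in> sets lborel\<close> have "N \<in> null_sets lborel" by auto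
  hence "negligible N" by (simp add: negligible_iff_null_sets null_sets_completionI)
  have uc: "continuous_on {0..1} u" using ud by (intro DERIV_continuous_on) auto
  have "(u has_real_derivative u' t) (at t)" if "t \<in> {0<..<1}" for t
  proof -
    have "(u has_real_derivative u' t) (at t within {0..1})" using ud that by auto
    thus ?thesis using that by (simp add: at_within_Icc_at)
  qed
  moreover have "(u' has_real_derivative - (c * gnl (u t))) (at t)"
    if "0 \<le> p" "q \<le> 1" "\<And>s. s \<in> {p<..<q} \<Longrightarrow> aw \<sigma> lam mu s = c" "t \<in> {p<..<q}" for p q c t
  proof (rule abs_cont_on_deriv_ae_continuous[OF ac that(1,2) \<open>negligible N\<close> _ _ that(4)])
    show "continuous_on {p..q} (\<lambda>s. - (c * gnl (u s)))"
      unfolding gnl_def using that(1,2) by (intro continuous_intros continuous_on_subset[OF uc]) auto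
    fix s assume s: "s \<in> {p<..<q} - N"
    hence "s \<in> {0<..<1} - N" using that(1,2) by auto
    hence "(u' has_real_derivative - (aw \<sigma> lam mu s * gnl (u s))) (at s)" using N0 by auto
    thus "(u' has_real_derivative - (c * gnl (u s))) (at s)" using that(3)[of s] s by simp
  qed
  ultimately show thesis using that uc u'c range \<open>u' 0 = 0\<close> \<open>u' 1 = 0\<close> by blast
qed

lemma is_solution_riccati:
  assumes "0 < \<sigma>" "\<sigma> < 1/2" and "is_solution \<sigma> lam mu u"
  obtains z where "z 0 = 0" "z 1 = 0"
    "riccati_ge lam 0 \<sigma> z" "riccati_le lam 0 \<sigma> z"
    "riccati_ge (- mu) \<sigma> (1 - \<sigma>) z" "riccati_le (- mu) \<sigma> (1 - \<sigma>) z"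
    "riccati_ge lam 0 \<sigma> (\<lambda>t. - z (1 - t))" "riccati_le lam 0 \<sigma> (\<lambda>t. - z (1 - t))"
proof (rule is_solution_classical[OF assms(3)])
  fix u' assume uc: "continuous_on {0..1} u" and u'c: "continuous_on {0..1} u'"
    and ud: "\<And>t. t \<in> {0<..<1} \<Longrightarrow> (u has_real_derivative u' t) (at t)"
    and u'd: "\<And>p q c t. 0 \<le> p \<Longrightarrow> q \<le> 1 \<Longrightarrow> (\<And>s. s \<in> {p<..<q} \<Longrightarrow> aw \<sigma> lam mu s = c) \<Longrightarrow>
                t \<in> {p<..<q} \<Longrightarrow> (u' has_real_derivative - (c * gnl (u t))) (at t)"
    and range: "\<And>t. t \<in> {0..1} \<Longrightarrow> 0 < u t \<and> u t < 1" and "u' 0 = 0" "u' 1 = 0"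
  define z where "z t = - u' t / gnl (u t)" for t
  have piece: "riccati_ge c p q z \<and> riccati_le c p q z"
    if pq: "0 \<le> p" "q \<le> 1" and aw: "\<And>s. s \<in> {p<..<q} \<Longrightarrow> aw \<sigma> lam mu s = c" for p q c
  proof -
    have "continuous_on {p..q} u" by (rule continuous_on_subset[OF uc]) (use pq in auto)
    moreover have "continuous_on {p..q} u'" by (rule continuous_on_subset[OF u'c]) (use pq in auto)
    moreover have "(u has_real_derivative u' t) (at t)" if "t \<in> {p<..<q}" for t
      using ud that pq by auto
    moreover have "0 < u t \<and> u t < 1" if "t \<in> {p..q}" for t using range that pq by auto
    ultimately show ?thesis unfolding z_def using riccati_quotient u'd[OF pq aw] by blast
  qed
  have right: "riccati_ge lam (1 - \<sigma>) 1 z" "riccati_le lam (1 - \<sigma>) 1 z"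
    using piece[of "1 - \<sigma>" 1 lam] assms by (auto simp: aw_def)
  show thesis
  proof (rule that)
    show "z 0 = 0" "z 1 = 0" using \<open>u' 0 = 0\<close> \<open>u' 1 = 0\<close> by (auto simp: z_def)
    show "riccati_ge lam 0 \<sigma> z" "riccati_le lam 0 \<sigma> z"
      using piece[of 0 \<sigma> lam] assms by (auto simp: aw_def)
    show "riccati_ge (- mu) \<sigma> (1 - \<sigma>) z" "riccati_le (- mu) \<sigma> (1 - \<sigma>) z"
      using piece[of \<sigma> "1 - \<sigma>" "- mu"] assms by (auto simp: aw_def)
    show "riccati_ge lam 0 \<sigma> (\<lambda>t. - z (1 - t))" "riccati_le lam 0 \<sigma> (\<lambda>t. - z (1 - t))"
      using riccati_ge_reflect[OF right(1), of 1] riccati_le_reflect[OF right(2), of 1] by simp_all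
  qed
qed

lemma no_solution_small_mu:
  assumes "0 < \<sigma>" "\<sigma> < 1/2" "0 < lam" "mu < min (lam * \<sigma>) 1 / 4"
  shows "\<not> is_solution \<sigma> lam mu u"
proof
  assume "is_solution \<sigma> lam mu u"
  with assms(1,2) show False
  proof (rule is_solution_riccati)
    fix z assume "z 0 = 0" "z 1 = 0" and left: "riccati_ge lam 0 \<sigma> z" and "riccati_le lam 0 \<sigma> z"
      and middle: "riccati_ge (- mu) \<sigma> (1 - \<sigma>) z" and "riccati_le (- mu) \<sigma> (1 - \<sigma>) z"
      and right: "riccati_ge lam 0 \<sigma> (\<lambda>t. - z (1 - t))" and "riccati_le lam 0 \<sigma> (\<lambda>t. - z (1 - t))"
    define s where "s = min (lam * \<sigma> / 2) (1/2)"
    have s: "0 < s" "s \<le> 1/2" "mu \<le> s / 2" using assms by (auto simp: s_def)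
    have "s \<le> z \<sigma>"
      using riccati_ge_lower_from_zero[OF _ _ _ left] assms \<open>z 0 = 0\<close> by (simp add: s_def)
    hence "0 < z (1 - \<sigma>)"
      using riccati_ge_stays_positive[OF _ _ s middle] assms by simp
    moreover have "s \<le> - z (1 - \<sigma>)"
      using riccati_ge_lower_from_zero[OF _ _ _ right] assms \<open>z 1 = 0\<close> by (simp add: s_def)
    ultimately show False using \<open>0 < s\<close> by linarith
  qed
qed

lemma no_solution_large_mu:
  assumes "0 < \<sigma>" "\<sigma> < 1/2" "0 \<le> lam" "lam \<le> 2/3" "4 / (1 - 2 * \<sigma>) \<le> mu"
  shows "\<not> is_solution \<sigma> lam mu u"
proof
  assume "is_solution \<sigma> lam mu u"
  with assms(1,2) show False
  proof (rule is_solution_riccati)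
    fix z assume "z 0 = 0" "z 1 = 0" and "riccati_ge lam 0 \<sigma> z" and left: "riccati_le lam 0 \<sigma> z"
      and "riccati_ge (- mu) \<sigma> (1 - \<sigma>) z" and middle: "riccati_le (- mu) \<sigma> (1 - \<sigma>) z"
      and "riccati_ge lam 0 \<sigma> (\<lambda>t. - z (1 - t))" and right: "riccati_le lam 0 \<sigma> (\<lambda>t. - z (1 - t))"
    have "(lam + 1/3) * \<sigma> \<le> 1 * (1/2)" using assms by (intro mult_mono) auto
    hence short: "(lam + 1/3) * (\<sigma> - 0) \<le> 1/2" by simp
    have "0 < 1 - 2 * \<sigma>" "1 - 2 * \<sigma> \<le> 1" using assms by auto
    hence "4 \<le> 4 / (1 - 2 * \<sigma>)" by (simp add: le_divide_eq)
    hence "4 \<le> mu" using assms(5) by linarith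
    have "4 / mu \<le> 4 / (4 / (1 - 2 * \<sigma>))"
      using assms(5) \<open>0 < 1 - 2 * \<sigma>\<close> \<open>4 \<le> mu\<close> by (intro divide_left_mono) auto
    hence "4 / mu \<le> (1 - \<sigma>) - \<sigma>" by simp
    have "z \<sigma> \<le> 1/2"
      using riccati_le_upper_from_zero[OF _ assms(3) short left] assms \<open>z 0 = 0\<close> by simp
    hence "z (1 - \<sigma>) \<le> -3/2"
      using riccati_le_drops_below[OF _ \<open>4 / mu \<le> (1 - \<sigma>) - \<sigma>\<close> middle] \<open>4 \<le> mu\<close> by simp
    moreover have "- z (1 - \<sigma>) \<le> 1/2"
      using riccati_le_upper_from_zero[OF _ assms(3) short right] assms \<open>z 1 = 0\<close> by simp
    ultimately show False by linarith
  qed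
qed

theorem theorem1p1:
  fixes \<sigma> :: real
  assumes "0 < \<sigma>" and "\<sigma> < 1/2"
  shows "\<exists>mu0s :: real \<Rightarrow> real.
           (\<forall>lam>0. mu0s lam > 0 \<and>
                 (\<forall>mu. 0 < mu \<and> mu < mu0s lam \<longrightarrow> \<not> (\<exists>u. is_solution \<sigma> lam mu u))) \<and>
           (\<exists>lams>0. \<forall>lam. 0 < lam \<and> lam < lams \<longrightarrow>
              (\<exists>mu0ss > mu0s lam. \<forall>mu>mu0ss. \<not> (\<exists>u. is_solution \<sigma> lam mu u)))"
proof -
  define mu0s :: "real \<Rightarrow> real" where "mu0s lam = min (lam * \<sigma>) 1 / 4" for lam
  have small: "mu0s lam > 0 \<and> (\<forall>mu. 0 < mu \<and> mu < mu0s lam \<longrightarrow> \<not> (\<exists>u. is_solution \<sigma> lam mu u))"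
    if "lam > 0" for lam
    using that assms no_solution_small_mu by (auto simp: mu0s_def)
  have large: "\<exists>mu0ss > mu0s lam. \<forall>mu>mu0ss. \<not> (\<exists>u. is_solution \<sigma> lam mu u)"
    if "0 < lam" "lam < 2/3" for lam
  proof (intro exI[of _ "4 / (1 - 2 * \<sigma>)"] conjI allI impI)
    have "mu0s lam \<le> 1/4" by (simp add: mu0s_def)
    moreover have "4 \<le> 4 / (1 - 2 * \<sigma>)" using assms by (simp add: le_divide_eq)
    ultimately show "mu0s lam < 4 / (1 - 2 * \<sigma>)" by linarith
    show "\<not> (\<exists>u. is_solution \<sigma> lam mu u)" if "4 / (1 - 2 * \<sigma>) < mu" for mu
      using no_solution_large_mu[OF assms, of lam mu] \<open>0 < lam\<close> \<open>lam < 2/3\<close> that by auto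
  qed
  show ?thesis using small large by (intro exI[of _ mu0s] conjI exI[of _ "2/3"]) auto
qed

end
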